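(* Let $k\in\mathbb N$, $E\subseteq W(A)$ and $\vec s\in V^\infty(A)$ such that $E$ is $k$-large in $\vec s$. Let $r\ge2$ and $E=\bigcup_{i=1}^r E_i$. Then there exist $1\le i\le r$ and $\vec t\in V^\infty(A)$ with $\vec t\le_k\vec s$ such that $E_i$ is $k$-large in $\vec t$.
   Context: $\mathbb N=\{0,1,2,\dots\}$. Fix an increasing sequence $A_0\subseteq A_1\subseteq A_2\subseteq\cdots$ of finite nonempty alphabets and set $A=\bigcup_{n\in\mathbb N}A_n$. $W(A)$ denotes the set of all finite words over $A$, including the empty word; words are concatenated by juxtaposition. Fix a symbol $x\notin A$. A variable word over $A$ is a finite word over $A\cup\{x\}$ in which $x$ occurs at least once; $V(A)$ is the set of variable words. For $s(x)\in V(A)$ and $a\in A\cup\{x\}$, $s(a)$ is obtained by replacing every occurrence of $x$ by $a$. $V^\infty(A)$ is the set of infinite sequences of variable words. For a sequence $(s_n(x))_{n\in I}$ of variable words and a sequence $(B_n)_{n\in I}$ of finite subsets of $A$, both indexed by a set $I\subseteq\mathbb N$ that is either a finite interval or of the form $\{m,m+1,\dots\}$: the constant span $\langle (s_n(x))_{n\in I}\,\|\,(B_n)_{n\in I}\rangle_c$ is the set of all words $s_{l_0}(a_0)s_{l_1}(a_1)\cdots s_{l_j}(a_j)$ with $j\ge0$, $l_0<\dots<l_j$ in $I$ and $a_i\in B_{l_i}$ for each $i$; the variable span $\langle (s_n(x))_{n\in I}\,\|\,(B_n)_{n\in I}\rangle_v$ is the set of all words $s_{l_0}(a_0)\cdots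 s_{l_j}(a_j)$ with $j\ge0$, $l_0<\dots<l_j$ in $I$, $a_i\in B_{l_i}\cup\{x\}$ for each $i$, and at least one $a_i=x$. (E.g. $(A_{k+n})_{n=p}^{q}$ denotes the sequence $B_n=A_{k+n}$, $p\le n\le q$.) Extracted $k$-subsequences: let $k\in\mathbb N$ and $\vec s=(s_n(x))_{n=0}^\infty\in V^\infty(A)$. A finite sequence $(t_n(x))_{n=0}^l$ of variable words is an extracted $k$-subsequence of $\vec s$ if there exist integers $0=m_0<m_1<\dots<m_{l+1}$ with $t_i(x)\in\langle (s_n(x))_{n=m_i}^{m_{i+1}-1}\,\|\,(A_{k+n})_{n=m_i}^{m_{i+1}-1}\rangle_v$ for all $0\le i\le l$. An infinite sequence $\vec t=(t_n(x))_{n=0}^\infty$ is an extracted $k$-subsequence of $\vec s$ if each initial segment $(t_n(x))_{n=0}^l$ is a finite extracted $k$-subsequence of $\vec s$. We write $\vec t\le_k\vec s$. A set $E\subseteq W(A)$ is $k$-large in $\vec s\in V^\infty(A)$ if $E\cap\langle\vec w\,\|\,(A_{k+n})_{n=0}^\infty\rangle_c\neq\emptyset$ for every $\vec w\in V^\infty(A)$ with $\vec w\le_k\vec s$. *)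

theory Defs
  imports Main
begin

text \<open>Letters are elements of type 'a; the alphabets are given by Alph :: nat => 'a set,
  with A = union of all Alph n. Variable words are lists over 'a option, where None plays
  the role of the variable symbol x (so x is automatically not in A).\<close>

definition alph_union :: "(nat \<Rightarrow> 'a set) \<Rightarrow> 'a set" where
  "alph_union Alph = (\<Union>n. Alph n)"

definition words :: "(nat \<Rightarrow> 'a set) \<Rightarrow> 'a list set" where
  "words Alph = {w. set w \<subseteq> alph_union Alph}"

definition var_words :: "(nat \<Rightarrow> 'a set) \<Rightarrow> 'a option list set" where
  "var_words Alph = {s. None \<in> set s \<and> (\<forall>b. Some b \<in> set s \<longrightarrow> b \<in> alph_union Alph)}"

definition var_seqs :: "(nat \<Rightarrow> 'a set) \<Rightarrow> (nat \<Rightarrow> 'a option list) set" where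
  "var_seqs Alph = {s. \<forall>n. s n \<in> var_words Alph}"

definition subst :: "'a option list \<Rightarrow> 'a \<Rightarrow> 'a list" where
  "subst s a = map (\<lambda>c. case c of None \<Rightarrow> a | Some b \<Rightarrow> b) s"

definition vsubst :: "'a option list \<Rightarrow> 'a option \<Rightarrow> 'a option list" where
  "vsubst s a = map (\<lambda>c. case c of None \<Rightarrow> a | Some b \<Rightarrow> Some b) s"

definition cspan :: "nat set \<Rightarrow> (nat \<Rightarrow> 'a option list) \<Rightarrow> (nat \<Rightarrow> 'a set) \<Rightarrow> 'a list set" where
  "cspan I s B = {concat (map2 (\<lambda>l a. subst (s l) a) ls as) | ls as.
      ls \<noteq> [] \<and> sorted_wrt (<) ls \<and> set ls \<subseteq> I \<and> length as = length ls \<and>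
      (\<forall>i<length ls. as ! i \<in> B (ls ! i))}"

definition vspan :: "nat set \<Rightarrow> (nat \<Rightarrow> 'a option list) \<Rightarrow> (nat \<Rightarrow> 'a set) \<Rightarrow> 'a option list set" where
  "vspan I s B = {concat (map2 (\<lambda>l a. vsubst (s l) a) ls as) | ls as.
      ls \<noteq> [] \<and> sorted_wrt (<) ls \<and> set ls \<subseteq> I \<and> length as = length ls \<and>
      (\<forall>i<length ls. as ! i \<in> Some ` B (ls ! i) \<union> {None}) \<and> None \<in> set as}"

text \<open>t \<le>_k s: t is an extracted k-subsequence of s (every initial segment is a finite
  extracted k-subsequence).\<close>
definition extracted :: "(nat \<Rightarrow> 'a set) \<Rightarrow> nat \<Rightarrow> (nat \<Rightarrow> 'a option list) \<Rightarrow> (nat \<Rightarrow> 'a option list) \<Rightarrow> bool" where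
  "extracted Alph k t s \<longleftrightarrow>
     (\<forall>l. \<exists>m :: nat \<Rightarrow> nat. m 0 = 0 \<and> (\<forall>i\<le>l. m i < m (Suc i)) \<and>
        (\<forall>i\<le>l. t i \<in> vspan {m i..<m (Suc i)} s (\<lambda>n. Alph (k + n))))"

definition k_large :: "(nat \<Rightarrow> 'a set) \<Rightarrow> nat \<Rightarrow> 'a list set \<Rightarrow> (nat \<Rightarrow> 'a option list) \<Rightarrow> bool" where
  "k_large Alph k E s \<longleftrightarrow>
     (\<forall>w \<in> var_seqs Alph. extracted Alph k w s \<longrightarrow> E \<inter> cspan UNIV w (\<lambda>n. Alph (k + n)) \<noteq> {})"

end

theory Submission
  imports Defs
begin

text \<open>
  Being an extracted k-subsequence is reflexive and transitive, and the
  constant span of an extracted subsequence w of s is contained in that of s.  Hence, if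
  E \<union> F is k-large in s but E is not, some w \<le>_k s has a constant span missing E; every
  extraction of w is an extraction of s with smaller span, so F is k-large in w.
  Induction on the number of colours then gives the theorem.

  The combinatorial core is substitution of spans into spans.  Elements of spans are
  represented by lists of pairs (index, symbol), a symbol being a letter Some a or the
  variable None.  Replacing each pair (n, c) of a representation over w by a
  representation of w n over s, with c plugged into its variable, yields a representation
  over s; indices stay increasing because the blocks of an extraction are consecutive,
  and letters stay admissible because the alphabets increase.
\<close>

section \<open>Index/symbol representations of span elements\<close>

definition plug :: "'a option \<Rightarrow> 'a option \<Rightarrow> 'a option" where
  "plug b c = (case c of None \<Rightarrow> b | Some d \<Rightarrow> Some d)"

definition span_eval :: "(nat \<Rightarrow> 'a option list) \<Rightarrow> (nat \<times> 'a option) list \<Rightarrow> 'a option list" where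
  "span_eval s ps = concat (map (\<lambda>(l, c). vsubst (s l) c) ps)"

definition admissible :: "(nat \<Rightarrow> 'a set) \<Rightarrow> nat set \<Rightarrow> (nat \<times> 'a option) list \<Rightarrow> bool" where
  "admissible B I ps \<longleftrightarrow> sorted_wrt (<) (map fst ps) \<and> fst ` set ps \<subseteq> I \<and>
     (\<forall>(l, c)\<in>set ps. c \<in> Some ` B l \<union> {None})"

definition compose ::
  "(nat \<Rightarrow> (nat \<times> 'a option) list) \<Rightarrow> (nat \<times> 'a option) list \<Rightarrow> (nat \<times> 'a option) list" where
  "compose qs ps = concat (map (\<lambda>(n, c). map (\<lambda>(p, c'). (p, plug c c')) (qs n)) ps)"

lemma vsubst_eq_map_plug: "vsubst x c = map (plug c) x"
  unfolding vsubst_def plug_def by simp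

lemma vsubst_None: "vsubst x None = x"
  unfolding vsubst_def by (induct x) (auto split: option.splits)

lemma plug_plug: "plug c (plug c' x) = plug (plug c c') x"
  by (simp add: plug_def split: option.splits)

lemma subst_vsubst: "subst x a = map the (vsubst x (Some a))"
  unfolding subst_def vsubst_def by (induct x) (auto split: option.splits)

lemma vsubst_span_eval:
  "vsubst (span_eval s qs) c = span_eval s (map (\<lambda>(p, c'). (p, plug c c')) qs)"
  by (induct qs) (auto simp: span_eval_def vsubst_eq_map_plug plug_plug)

lemma span_eval_compose:
  assumes "\<forall>(n, c)\<in>set ps. w n = span_eval s (qs n)"
  shows "span_eval w ps = span_eval s (compose qs ps)"
  using assms
  by (induct ps) (auto simp: span_eval_def compose_def vsubst_span_eval[unfolded span_eval_def])

lemma set_compose: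
  "(p, b) \<in> set (compose qs ps) \<longleftrightarrow>
     (\<exists>n c c'. (n, c) \<in> set ps \<and> (p, c') \<in> set (qs n) \<and> b = plug c c')"
  unfolding compose_def by force

lemma admissible_mem:
  assumes "admissible B I ps" "(l, c) \<in> set ps"
  shows "l \<in> I" "c \<in> Some ` B l \<union> {None}"
  using assms unfolding admissible_def by fastforce+

lemma admissible_nth:
  assumes "admissible B I ps" "i < length ps"
  shows "snd (ps ! i) \<in> Some ` B (fst (ps ! i)) \<union> {None}"
proof -
  have "(fst (ps ! i), snd (ps ! i)) \<in> set ps" using assms(2) by simp
  then show ?thesis using assms(1) unfolding admissible_def by blast
qed

lemma admissible_within:
  assumes "admissible B I ps" "fst ` set ps \<subseteq> J"
  shows "admissible B J ps"
  using assms by (simp add: admissible_def)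

lemma zip_pred: "length as = length ls \<Longrightarrow>
   (\<forall>i<length ls. P (ls ! i) (as ! i)) \<longleftrightarrow> (\<forall>(l, c)\<in>set (zip ls as). P l c)"
  by (auto simp: set_zip)

lemma vspan_iff:
  "x \<in> vspan I s B \<longleftrightarrow> (\<exists>ps. x = span_eval s ps \<and> admissible B I ps \<and> None \<in> snd ` set ps)"
proof
  assume "x \<in> vspan I s B"
  then obtain ls as where x: "x = concat (map2 (\<lambda>l a. vsubst (s l) a) ls as)"
    and h: "sorted_wrt (<) ls" "set ls \<subseteq> I" "length as = length ls"
      "\<forall>i<length ls. as ! i \<in> Some ` B (ls ! i) \<union> {None}" "None \<in> set as"
    unfolding vspan_def by blast
  show "\<exists>ps. x = span_eval s ps \<and> admissible B I ps \<and> None \<in> snd ` set ps"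
  proof (intro exI conjI)
    show "x = span_eval s (zip ls as)" by (simp add: x span_eval_def)
    show "admissible B I (zip ls as)"
      using h(1-4) zip_pred[OF h(3), of "\<lambda>l c. c \<in> Some ` B l \<union> {None}"]
      by (simp add: admissible_def flip: set_map)
    show "None \<in> snd ` set (zip ls as)" using h(3,5) by (simp flip: set_map)
  qed
next
  assume "\<exists>ps. x = span_eval s ps \<and> admissible B I ps \<and> None \<in> snd ` set ps"
  then obtain ps where x: "x = span_eval s ps" and ps: "admissible B I ps" and var: "None \<in> snd ` set ps"
    by blast
  have "x = concat (map2 (\<lambda>l a. vsubst (s l) a) (map fst ps) (map snd ps))"
    by (simp add: x span_eval_def zip_map_fst_snd)
  moreover have "\<forall>i<length (map fst ps). map snd ps ! i \<in> Some ` B (map fst ps ! i) \<union> {None}"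
    using admissible_nth[OF ps] by simp
  moreover have "map fst ps \<noteq> []" "None \<in> set (map snd ps)" using var by auto
  moreover have "sorted_wrt (<) (map fst ps)" "set (map fst ps) \<subseteq> I"
    using ps by (simp_all add: admissible_def)
  moreover have "length (map snd ps) = length (map fst ps)" by simp
  ultimately show "x \<in> vspan I s B" unfolding vspan_def by blast
qed

lemma map_the_span_eval:
  "None \<notin> snd ` set ps \<Longrightarrow>
     map the (span_eval s ps) = concat (map (\<lambda>(l, c). subst (s l) (the c)) ps)"
  by (induct ps) (auto simp: span_eval_def subst_vsubst)

lemma cspan_iff:
  "x \<in> cspan I s B \<longleftrightarrow>
     (\<exists>ps. x = map the (span_eval s ps) \<and> admissible B I ps \<and> ps \<noteq> [] \<and> None \<notin> snd ` set ps)"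
proof
  assume "x \<in> cspan I s B"
  then obtain ls as where x: "x = concat (map2 (\<lambda>l a. subst (s l) a) ls as)"
    and h: "ls \<noteq> []" "sorted_wrt (<) ls" "set ls \<subseteq> I" "length as = length ls"
      "\<forall>i<length ls. as ! i \<in> B (ls ! i)"
    unfolding cspan_def by blast
  have const: "None \<notin> snd ` set (zip ls (map Some as))"
    by (auto simp: set_zip)
  show "\<exists>ps. x = map the (span_eval s ps) \<and> admissible B I ps \<and> ps \<noteq> [] \<and> None \<notin> snd ` set ps"
  proof (intro exI conjI)
    show "x = map the (span_eval s (zip ls (map Some as)))"
      using const by (simp add: x map_the_span_eval zip_map2 comp_def split_def del: map2_map_map)
    show "admissible B I (zip ls (map Some as))"
      using h(2-5) zip_pred[of "map Some as" ls "\<lambda>l c. c \<in> Some ` B l \<union> {None}"]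
      by (simp add: admissible_def flip: set_map)
    show "zip ls (map Some as) \<noteq> []"
      using h(1,4) by (metis length_0_conv length_map length_zip min.idem)
  qed (rule const)
next
  assume "\<exists>ps. x = map the (span_eval s ps) \<and> admissible B I ps \<and> ps \<noteq> [] \<and> None \<notin> snd ` set ps"
  then obtain ps where x: "x = map the (span_eval s ps)" and ps: "admissible B I ps" and "ps \<noteq> []"
    and const: "None \<notin> snd ` set ps"
    by blast
  have "x = concat (map2 (\<lambda>l a. subst (s l) a) (map fst ps) (map (the \<circ> snd) ps))"
    using const by (simp add: x map_the_span_eval, induct ps, auto)
  moreover have "\<forall>i<length (map fst ps). map (the \<circ> snd) ps ! i \<in> B (map fst ps ! i)"
  proof (intro allI impI)
    fix i assume "i < length (map fst ps)"
    then have "snd (ps ! i) \<in> Some ` B (fst (ps ! i)) \<union> {None}" "snd (ps ! i) \<in> snd ` set ps"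
      using admissible_nth[OF ps] by simp_all
    moreover have "snd (ps ! i) \<noteq> None" using const calculation(2) by force
    ultimately show "map (the \<circ> snd) ps ! i \<in> B (map fst ps ! i)"
      using \<open>i < length (map fst ps)\<close> by auto
  qed
  moreover have "map fst ps \<noteq> []" using \<open>ps \<noteq> []\<close> by simp
  moreover have "sorted_wrt (<) (map fst ps)" "set (map fst ps) \<subseteq> I"
    using ps by (simp_all add: admissible_def)
  moreover have "length (map (the \<circ> snd) ps) = length (map fst ps)" by simp
  ultimately show "x \<in> cspan I s B" unfolding cspan_def by blast
qed

lemma chain_less:
  assumes "\<forall>i\<le>L. m i < m (Suc i)" "i < j" "j \<le> Suc L"
  shows "m i < (m j :: nat)"
  using assms(2,3)
proof (induct j)
  case (Suc j)
  then show ?case using assms(1) by (cases "i = j") (auto intro: less_trans)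
qed simp

lemma chain_le:
  assumes "\<forall>i\<le>L. m i < m (Suc i)" "i \<le> j" "j \<le> Suc L"
  shows "m i \<le> (m j :: nat)"
  using chain_less[OF assms(1)] assms(2,3) by (cases "i = j") (auto simp: less_imp_le)

lemma chain_ge_index:
  assumes "\<forall>i\<le>L. m i < m (Suc i)" "m 0 = 0" "i \<le> Suc L"
  shows "i \<le> (m i :: nat)"
  using assms(3)
proof (induct i)
  case (Suc i)
  then show ?case using assms(1)[rule_format, of i] by simp
qed (simp add: assms(2))

section \<open>Composition of representations\<close>

lemma sorted_compose:
  assumes "sorted_wrt (<) (map fst ps)"
    and "\<And>n c. (n, c) \<in> set ps \<Longrightarrow>
           sorted_wrt (<) (map fst (qs n)) \<and> fst ` set (qs n) \<subseteq> {m n..<m (Suc n)}"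
    and "\<And>n c n' c'. (n, c) \<in> set ps \<Longrightarrow> (n', c') \<in> set ps \<Longrightarrow> n < n' \<Longrightarrow> m (Suc n) \<le> (m n' :: nat)"
  shows "sorted_wrt (<) (map fst (compose qs ps))"
  using assms
proof (induct ps)
  case (Cons nc ps)
  obtain n c where nc: "nc = (n, c)" by force
  have IH: "sorted_wrt (<) (map fst (compose qs ps))"
  proof (rule Cons.hyps)
    show "sorted_wrt (<) (map fst ps)" using Cons.prems(1) by simp
  qed (meson Cons.prems(2,3) list.set_intros(2))+
  have head: "sorted_wrt (<) (map fst (qs n))" "fst ` set (qs n) \<subseteq> {m n..<m (Suc n)}"
    using Cons.prems(2)[of n c] nc by auto
  have cross: "x < y" if x: "x \<in> set (map fst (qs n))" and y: "y \<in> set (map fst (compose qs ps))" for x y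
  proof -
    obtain b where "(y, b) \<in> set (compose qs ps)" using y by auto
    then obtain n' c' c'' where h: "(n', c') \<in> set ps" "(y, c'') \<in> set (qs n')"
      unfolding set_compose by blast
    have "n < n'" using Cons.prems(1) h(1) nc by force
    have "x < m (Suc n)" using x head(2) by auto
    also have "m (Suc n) \<le> m n'"
      using Cons.prems(3)[of n c n' c'] h(1) nc \<open>n < n'\<close> by simp
    also have "m n' \<le> y" using Cons.prems(2)[of n' c'] h by force
    finally show "x < y" .
  qed
  have eq: "map fst (compose qs (nc # ps)) = map fst (qs n) @ map fst (compose qs ps)"
    by (simp add: compose_def nc case_prod_beta comp_def)
  show ?case
    unfolding eq sorted_wrt_append using IH head(1) cross by blast
qed (simp add: compose_def)

text \<open>Admissibility survives composition when the letter of outer index n is used only at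
  inner indices \<ge> m n \<ge> n, which is where increasing alphabets are needed.\<close>
lemma admissible_compose:
  assumes ps: "admissible B I ps"
    and qs: "\<And>n c. (n, c) \<in> set ps \<Longrightarrow> admissible B {m n..<m (Suc n)} (qs n)"
    and mono_B: "\<And>i j. i \<le> j \<Longrightarrow> B i \<subseteq> B j"
    and below: "\<And>n c. (n, c) \<in> set ps \<Longrightarrow> n \<le> m n"
    and sep: "\<And>n c n' c'. (n, c) \<in> set ps \<Longrightarrow> (n', c') \<in> set ps \<Longrightarrow> n < n' \<Longrightarrow> m (Suc n) \<le> (m n' :: nat)"
    and J: "\<And>n c. (n, c) \<in> set ps \<Longrightarrow> {m n..<m (Suc n)} \<subseteq> J"
  shows "admissible B J (compose qs ps)"
proof -
  have "sorted_wrt (<) (map fst (compose qs ps))"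
  proof (rule sorted_compose[where m = m])
    show "sorted_wrt (<) (map fst ps)" using ps by (simp add: admissible_def)
    show "sorted_wrt (<) (map fst (qs n)) \<and> fst ` set (qs n) \<subseteq> {m n..<m (Suc n)}"
      if "(n, c) \<in> set ps" for n c
      using qs[OF that] by (simp add: admissible_def)
  qed (rule sep)
  moreover have "p \<in> J \<and> b \<in> Some ` B p \<union> {None}" if pb: "(p, b) \<in> set (compose qs ps)" for p b
  proof -
    obtain n c c' where h: "(n, c) \<in> set ps" "(p, c') \<in> set (qs n)" "b = plug c c'"
      using pb unfolding set_compose by blast
    have p: "p \<in> {m n..<m (Suc n)}" and c': "c' \<in> Some ` B p \<union> {None}"
      using admissible_mem[OF qs[OF h(1)] h(2)] by blast+
    have "b \<in> Some ` B p \<union> {None}"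
    proof (cases c')
      case None
      have "B n \<subseteq> B p" using below[OF h(1)] p by (intro mono_B) simp
      moreover have "c \<in> Some ` B n \<union> {None}" using admissible_mem[OF ps h(1)] by blast
      ultimately show ?thesis using h(3) None by (auto simp: plug_def)
    next
      case (Some d)
      then show ?thesis using c' h(3) by (simp add: plug_def)
    qed
    then show ?thesis using J[OF h(1)] p by blast
  qed
  ultimately show ?thesis unfolding admissible_def by auto
qed

lemma snd_set_compose:
  assumes "\<And>n c. (n, c) \<in> set ps \<Longrightarrow> None \<in> snd ` set (qs n)"
  shows "snd ` set ps \<subseteq> snd ` set (compose qs ps)"
    and "None \<in> snd ` set (compose qs ps) \<Longrightarrow> None \<in> snd ` set ps"
proof
  fix c assume "c \<in> snd ` set ps"
  then obtain n where nc: "(n, c) \<in> set ps" by force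
  then obtain p where "(p, None) \<in> set (qs n)" using assms by force
  then have "(p, plug c None) \<in> set (compose qs ps)" unfolding set_compose using nc by blast
  then show "c \<in> snd ` set (compose qs ps)" by (force simp: plug_def)
next
  assume "None \<in> snd ` set (compose qs ps)"
  then obtain p where "(p, None) \<in> set (compose qs ps)" by force
  then obtain n c c' where "(n, c) \<in> set ps" "None = plug c c'"
    unfolding set_compose by blast
  then have "(n, None) \<in> set ps" by (auto simp: plug_def split: option.splits)
  then show "None \<in> snd ` set ps" by force
qed

lemma refine_blocks:
  assumes m0: "m 0 = 0" and m_inc: "\<forall>i\<le>L. m i < m (Suc i)"
    and blocks: "\<forall>n\<le>L. w n \<in> vspan {m n..<m (Suc n)} s B"
    and mono_B: "\<And>i j. i \<le> j \<Longrightarrow> B i \<subseteq> B j"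
    and ps: "admissible B {a..<b} ps" and b: "b \<le> Suc L"
  shows "\<exists>ps'. span_eval w ps = span_eval s ps' \<and> admissible B {m a..<m b} ps' \<and>
    snd ` set ps \<subseteq> snd ` set ps' \<and> (None \<in> snd ` set ps' \<longrightarrow> None \<in> snd ` set ps)"
proof -
  obtain qs where qs: "\<And>n. n \<le> L \<Longrightarrow> w n = span_eval s (qs n) \<and>
      admissible B {m n..<m (Suc n)} (qs n) \<and> None \<in> snd ` set (qs n)"
    using blocks unfolding vspan_iff by metis
  have range: "a \<le> n \<and> Suc n \<le> b" if "(n, c) \<in> set ps" for n c
    using admissible_mem(1)[OF ps that] by simp
  have qs_ps: "w n = span_eval s (qs n) \<and> admissible B {m n..<m (Suc n)} (qs n) \<and>
      None \<in> snd ` set (qs n)" if "(n, c) \<in> set ps" for n c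
    using qs[of n] range[OF that] b by simp
  then have inner_var: "\<And>n c. (n, c) \<in> set ps \<Longrightarrow> None \<in> snd ` set (qs n)" by blast
  show ?thesis
  proof (intro exI[of _ "compose qs ps"] conjI impI)
    show "span_eval w ps = span_eval s (compose qs ps)"
      using qs_ps by (intro span_eval_compose) auto
    show "admissible B {m a..<m b} (compose qs ps)"
    proof (rule admissible_compose[OF ps _ mono_B])
      fix n c assume nc: "(n, c) \<in> set ps"
      show "admissible B {m n..<m (Suc n)} (qs n)" using qs_ps[OF nc] by simp
      show "n \<le> m n" using chain_ge_index[OF m_inc m0] range[OF nc] b by simp
      show "{m n..<m (Suc n)} \<subseteq> {m a..<m b}"
        using chain_le[OF m_inc, of a n] chain_le[OF m_inc, of "Suc n" b] range[OF nc] b by auto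
      fix n' c' assume "(n', c') \<in> set ps" "n < n'"
      then have "Suc n \<le> n'" "n' \<le> Suc L" using range b by fastforce+
      then show "m (Suc n) \<le> m n'" by (rule chain_le[OF m_inc])
    qed
    show "snd ` set ps \<subseteq> snd ` set (compose qs ps)" by (rule snd_set_compose(1)[OF inner_var])
    show "None \<in> snd ` set ps" if "None \<in> snd ` set (compose qs ps)"
      by (rule snd_set_compose(2)[OF inner_var that])
  qed
qed

section \<open>Extraction is a preorder shrinking constant spans\<close>

lemma vspan_self: "s i \<in> vspan {i..<Suc i} s B"
proof -
  have "s i = span_eval s [(i, None)]" by (simp add: span_eval_def vsubst_None)
  moreover have "admissible B {i..<Suc i} [(i, None)]" by (simp add: admissible_def)
  ultimately show ?thesis unfolding vspan_iff by force
qed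

lemma extracted_refl: "extracted Alph k s s"
  unfolding extracted_def
proof (rule allI, rule exI[of _ id], intro conjI)
  fix l
  show "id 0 = (0::nat)" "\<forall>i\<le>l. id i < id (Suc i)" by simp_all
  show "\<forall>i\<le>l. s i \<in> vspan {id i..<id (Suc i)} s (\<lambda>n. Alph (k + n))"
    unfolding id_def by (blast intro: vspan_self)
qed

lemma vspan_refine:
  assumes m0: "m 0 = 0" and m_inc: "\<forall>i\<le>L. m i < m (Suc i)"
    and blocks: "\<forall>n\<le>L. w n \<in> vspan {m n..<m (Suc n)} s B"
    and mono_B: "\<And>i j. i \<le> j \<Longrightarrow> B i \<subseteq> B j"
    and t: "t \<in> vspan {a..<b} w B" and b: "b \<le> Suc L"
  shows "t \<in> vspan {m a..<m b} s B"
proof -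
  obtain ps where t_eq: "t = span_eval w ps" and ps: "admissible B {a..<b} ps"
    and var: "None \<in> snd ` set ps"
    using t unfolding vspan_iff by blast
  obtain ps' where eval: "span_eval w ps = span_eval s ps'" and ps': "admissible B {m a..<m b} ps'"
    and symbols: "snd ` set ps \<subseteq> snd ` set ps'"
    using refine_blocks[OF m0 m_inc blocks mono_B ps b] by blast
  have "None \<in> snd ` set ps'" using symbols var by (rule subsetD)
  then show ?thesis unfolding vspan_iff t_eq eval using ps' by blast
qed

text \<open>Transitivity: compose the block boundaries of t \<le>_k w with those of w \<le>_k s, taking
  enough blocks of w to cover the first l + 1 blocks of t.\<close>
lemma extracted_trans:
  assumes tw: "extracted Alph k t w" and ws: "extracted Alph k w s"
    and mono: "\<And>i j. i \<le> j \<Longrightarrow> Alph i \<subseteq> Alph j"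
  shows "extracted Alph k t s"
  unfolding extracted_def
proof
  fix l
  let ?B = "\<lambda>n. Alph (k + n)"
  obtain m where m0: "m 0 = 0" and m_inc: "\<forall>i\<le>l. m i < m (Suc i)"
    and t_blocks: "\<forall>i\<le>l. t i \<in> vspan {m i..<m (Suc i)} w ?B"
    using tw unfolding extracted_def by blast
  define L where "L = m (Suc l)"
  obtain m' where m'0: "m' 0 = 0" and m'_inc: "\<forall>i\<le>L. m' i < m' (Suc i)"
    and w_blocks: "\<forall>i\<le>L. w i \<in> vspan {m' i..<m' (Suc i)} s ?B"
    using ws unfolding extracted_def by blast
  have below_L: "m (Suc i) \<le> L" if "i \<le> l" for i
    unfolding L_def using chain_le[OF m_inc, of "Suc i" "Suc l"] that by simp
  show "\<exists>M. M 0 = 0 \<and> (\<forall>i\<le>l. M i < M (Suc i)) \<and> (\<forall>i\<le>l. t i \<in> vspan {M i..<M (Suc i)} s ?B)"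
  proof (intro exI[of _ "m' \<circ> m"] conjI allI impI)
    show "(m' \<circ> m) 0 = 0" by (simp add: m0 m'0)
    fix i assume i: "i \<le> l"
    show "(m' \<circ> m) i < (m' \<circ> m) (Suc i)"
      using chain_less[OF m'_inc, of "m i" "m (Suc i)"] m_inc i below_L[OF i] by simp
    show "t i \<in> vspan {(m' \<circ> m) i..<(m' \<circ> m) (Suc i)} s ?B"
      using vspan_refine[OF m'0 m'_inc w_blocks _ _] t_blocks i below_L[OF i] mono by simp
  qed
qed

text \<open>A constant-span word of t uses finitely many t i, which lie in finitely many blocks of w.\<close>
lemma cspan_extracted_subset:
  assumes tw: "extracted Alph k t w" and mono: "\<And>i j. i \<le> j \<Longrightarrow> Alph i \<subseteq> Alph j"
  shows "cspan UNIV t (\<lambda>n. Alph (k + n)) \<subseteq> cspan UNIV w (\<lambda>n. Alph (k + n))"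
proof
  let ?B = "\<lambda>n. Alph (k + n)"
  fix x assume "x \<in> cspan UNIV t ?B"
  then obtain ps where x: "x = map the (span_eval t ps)" and ps: "admissible ?B UNIV ps"
    and "ps \<noteq> []" and const: "None \<notin> snd ` set ps"
    unfolding cspan_iff by blast
  define L where "L = Max (fst ` set ps)"
  have "n \<le> L" if "n \<in> fst ` set ps" for n unfolding L_def using that by simp
  then have "fst ` set ps \<subseteq> {0..<Suc L}" by fastforce
  then have ps_L: "admissible ?B {0..<Suc L} ps" by (rule admissible_within[OF ps])
  obtain m where m0: "m 0 = 0" and m_inc: "\<forall>i\<le>L. m i < m (Suc i)"
    and blocks: "\<forall>i\<le>L. t i \<in> vspan {m i..<m (Suc i)} w ?B"
    using tw unfolding extracted_def by blast
  obtain ps' where eval: "span_eval t ps = span_eval w ps'"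
    and ps': "admissible ?B {m 0..<m (Suc L)} ps'"
    and symbols: "snd ` set ps \<subseteq> snd ` set ps'" "None \<in> snd ` set ps' \<Longrightarrow> None \<in> snd ` set ps"
    using refine_blocks[OF m0 m_inc blocks _ ps_L] mono by auto
  have "admissible ?B UNIV ps'" using admissible_within[OF ps'] by simp
  moreover have "ps' \<noteq> []" using symbols(1) \<open>ps \<noteq> []\<close> by auto
  ultimately show "x \<in> cspan UNIV w ?B"
    unfolding cspan_iff x eval using symbols(2) const by blast
qed

section \<open>Partition regularity of largeness\<close>

lemma k_large_Un:
  assumes mono: "\<And>i j. i \<le> j \<Longrightarrow> Alph i \<subseteq> Alph j"
    and large: "k_large Alph k (E \<union> F) s" and not_large: "\<not> k_large Alph k E s"
  shows "\<exists>w\<in>var_seqs Alph. extracted Alph k w s \<and> k_large Alph k F w"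
proof -
  let ?B = "\<lambda>n. Alph (k + n)"
  obtain w where w: "w \<in> var_seqs Alph" "extracted Alph k w s"
    and E_misses: "E \<inter> cspan UNIV w ?B = {}"
    using not_large unfolding k_large_def by blast
  have "F \<inter> cspan UNIV w' ?B \<noteq> {}"
    if w': "w' \<in> var_seqs Alph" "extracted Alph k w' w" for w'
  proof -
    have "(E \<union> F) \<inter> cspan UNIV w' ?B \<noteq> {}"
      using large w' extracted_trans[OF w'(2) w(2) mono] unfolding k_large_def by blast
    moreover have "E \<inter> cspan UNIV w' ?B = {}"
      using E_misses cspan_extracted_subset[OF w'(2) mono] by blast
    ultimately show ?thesis by blast
  qed
  then show ?thesis using w unfolding k_large_def by blast
qed

lemma k_large_UN:
  fixes r :: nat
  assumes mono: "\<And>i j. i \<le> j \<Longrightarrow> Alph i \<subseteq> Alph j"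
    and s: "s \<in> var_seqs Alph" and r: "1 \<le> r"
    and large: "k_large Alph k (\<Union>i\<in>{1..r}. Es i) s"
  shows "\<exists>i\<in>{1..r}. \<exists>t\<in>var_seqs Alph. extracted Alph k t s \<and> k_large Alph k (Es i) t"
  using r large
proof (induction r rule: nat_induct_at_least)
  case base
  then show ?case using s extracted_refl by auto
next
  case (Suc r)
  have "(\<Union>i\<in>{1..Suc r}. Es i) = (\<Union>i\<in>{1..r}. Es i) \<union> Es (Suc r)"
    by (auto simp: atLeastAtMostSuc_conv)
  then have large_Un: "k_large Alph k ((\<Union>i\<in>{1..r}. Es i) \<union> Es (Suc r)) s"
    using Suc.prems by simp
  show ?case
  proof (cases "k_large Alph k (\<Union>i\<in>{1..r}. Es i) s")
    case True
    then show ?thesis using Suc.IH by force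
  next
    case False
    then show ?thesis using k_large_Un[OF mono large_Un] by force
  qed
qed

theorem fact3p5:
  fixes Alph :: "nat \<Rightarrow> 'a set"
    and k :: nat and E :: "'a list set" and s :: "nat \<Rightarrow> 'a option list"
    and r :: nat and Es :: "nat \<Rightarrow> 'a list set"
  assumes mono_alph: "\<And>n. Alph n \<subseteq> Alph (Suc n)"
    and fin_alph: "\<And>n. finite (Alph n)"
    and ne_alph: "\<And>n. Alph n \<noteq> {}"
    and E_words: "E \<subseteq> words Alph"
    and s_seq: "s \<in> var_seqs Alph"
    and large: "k_large Alph k E s"
    and r2: "r \<ge> 2"
    and E_union: "E = (\<Union>i\<in>{1..r}. Es i)"
  shows "\<exists>i\<in>{1..r}. \<exists>t \<in> var_seqs Alph. extracted Alph k t s \<and> k_large Alph k (Es i) t"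
proof (rule k_large_UN[OF _ s_seq])
  show "\<And>i j. i \<le> j \<Longrightarrow> Alph i \<subseteq> Alph j"
    using mono_alph by (rule lift_Suc_mono_le)
  show "1 \<le> r" using r2 by simp
  show "k_large Alph k (\<Union>i\<in>{1..r}. Es i) s" using large E_union by simp
qed

end
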